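(* Fix $f\in S_1\oplus S_2$ with $f\ne0$. Then $\dim\big(\pi_{1,2}P_\xi(S_3)+[f]\big)=4$ for almost every $\xi\in\mathbb{R}^2$.
   Context: For $j\ge0$, $S_j$ is the real vector space of homogeneous polynomials of degree $j$ in $r,s$; $[\cdot]$ denotes linear span. For $\xi=(a,b)\in\mathbb{R}^2$ and a polynomial $f$, $P_\xi f(r,s)=f(\xi)+\partial_rf(\xi)(r-a)+\partial_sf(\xi)(s-b)+\frac12\partial_{rr}f(\xi)(r-a)^2+\partial_{rs}f(\xi)(r-a)(s-b)+\frac12\partial_{ss}f(\xi)(s-b)^2$ (second-order Taylor polynomial at $\xi$), an element of $S_0\oplus S_1\oplus S_2$. $\pi_{1,2}$ is the projection of $S_0\oplus S_1\oplus S_2$ onto $S_1\oplus S_2$ along $S_0$. *)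

theory Defs
  imports "HOL-Analysis.Analysis"
begin

text \<open>
  S_3 (homogeneous cubics in r,s) is represented by coefficient vectors c :: real^4,
  c = (c1,c2,c3,c4) standing for c1 r^3 + c2 r^2 s + c3 r s^2 + c4 s^3.
  S_1 + S_2 is represented by coefficient vectors q :: real^5 with respect to the
  monomial basis r, s, r^2, r s, s^2 (S_0 is the constant term).
\<close>

definition eval12 :: "real ^ 5 \<Rightarrow> real \<times> real \<Rightarrow> real" where
  "eval12 q x = q$1 * fst x + q$2 * snd x + q$3 * (fst x)^2 + q$4 * (fst x * snd x) + q$5 * (snd x)^2"

definition cubic :: "real ^ 4 \<Rightarrow> real \<times> real \<Rightarrow> real" where
  "cubic c x = c$1 * (fst x)^3 + c$2 * (fst x)^2 * snd x + c$3 * fst x * (snd x)^2 + c$4 * (snd x)^3"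

definition d_r :: "real ^ 4 \<Rightarrow> real \<times> real \<Rightarrow> real" where
  "d_r c x = 3 * c$1 * (fst x)^2 + 2 * c$2 * fst x * snd x + c$3 * (snd x)^2"
definition d_s :: "real ^ 4 \<Rightarrow> real \<times> real \<Rightarrow> real" where
  "d_s c x = c$2 * (fst x)^2 + 2 * c$3 * fst x * snd x + 3 * c$4 * (snd x)^2"
definition d_rr :: "real ^ 4 \<Rightarrow> real \<times> real \<Rightarrow> real" where
  "d_rr c x = 6 * c$1 * fst x + 2 * c$2 * snd x"
definition d_rs :: "real ^ 4 \<Rightarrow> real \<times> real \<Rightarrow> real" where
  "d_rs c x = 2 * c$2 * fst x + 2 * c$3 * snd x"
definition d_ss :: "real ^ 4 \<Rightarrow> real \<times> real \<Rightarrow> real" where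
  "d_ss c x = 2 * c$3 * fst x + 6 * c$4 * snd x"

definition taylor2 :: "real \<times> real \<Rightarrow> real ^ 4 \<Rightarrow> real \<times> real \<Rightarrow> real" where
  "taylor2 \<xi> c y = (let a = fst \<xi>; b = snd \<xi>; r = fst y; s = snd y in
      cubic c \<xi> + d_r c \<xi> * (r - a) + d_s c \<xi> * (s - b)
      + d_rr c \<xi> / 2 * (r - a)^2 + d_rs c \<xi> * (r - a) * (s - b) + d_ss c \<xi> / 2 * (s - b)^2)"

definition taylor_const :: "real \<times> real \<Rightarrow> real ^ 4 \<Rightarrow> real" where
  "taylor_const \<xi> c = (let a = fst \<xi>; b = snd \<xi> in
      cubic c \<xi> - d_r c \<xi> * a - d_s c \<xi> * b + d_rr c \<xi> / 2 * a^2 + d_rs c \<xi> * a * b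
      + d_ss c \<xi> / 2 * b^2)"

text \<open>pi_{1,2} P_xi f: the S_1 + S_2 part of P_xi f, as coefficient vector.\<close>
definition piP :: "real \<times> real \<Rightarrow> real ^ 4 \<Rightarrow> real ^ 5" where
  "piP \<xi> c = (let a = fst \<xi>; b = snd \<xi> in
      vector [d_r c \<xi> - d_rr c \<xi> * a - d_rs c \<xi> * b,
              d_s c \<xi> - d_rs c \<xi> * a - d_ss c \<xi> * b,
              d_rr c \<xi> / 2, d_rs c \<xi>, d_ss c \<xi> / 2])"

lemma exhaust_5:
  fixes x :: 5
  shows "x = 1 \<or> x = 2 \<or> x = 3 \<or> x = 4 \<or> x = 5"
proof (induct x)
  case (of_int z)
  then have "z = 0 \<or> z = 1 \<or> z = 2 \<or> z = 3 \<or> z = 4" by fastforce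
  then show ?case by auto
qed

lemma UNIV_5: "UNIV = {1, 2, 3, 4, 5::5}"
  using exhaust_5 by auto

lemma vector_5:
 "(vector [x1,x2,x3,x4,x5] ::real^5)$1 = x1"
 "(vector [x1,x2,x3,x4,x5] ::real^5)$2 = x2"
 "(vector [x1,x2,x3,x4,x5] ::real^5)$3 = x3"
 "(vector [x1,x2,x3,x4,x5] ::real^5)$4 = x4"
 "(vector [x1,x2,x3,x4,x5] ::real^5)$5 = x5"
  unfolding vector_def by simp_all

lemma taylor2_decomp: "taylor2 \<xi> c y = taylor_const \<xi> c + eval12 (piP \<xi> c) y"
  by (cases \<xi>; cases y) (simp add: taylor2_def taylor_const_def piP_def eval12_def vector_5
      power2_eq_square field_simps)

lemma d_r_correct: "((\<lambda>r. cubic c (r, b)) has_real_derivative d_r c (a, b)) (at a)"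
  unfolding cubic_def d_r_def fst_conv snd_conv
  by (rule derivative_eq_intros refl)+ (simp add: algebra_simps power2_eq_square)

lemma d_s_correct: "((\<lambda>s. cubic c (a, s)) has_real_derivative d_s c (a, b)) (at b)"
  unfolding cubic_def d_s_def fst_conv snd_conv
  by (rule derivative_eq_intros refl)+ (simp add: algebra_simps power2_eq_square)

lemma d_rr_correct: "((\<lambda>r. d_r c (r, b)) has_real_derivative d_rr c (a, b)) (at a)"
  unfolding d_r_def d_rr_def fst_conv snd_conv
  by (rule derivative_eq_intros refl)+ (simp add: algebra_simps power2_eq_square)

lemma d_rs_correct: "((\<lambda>s. d_r c (a, s)) has_real_derivative d_rs c (a, b)) (at b)"
  unfolding d_r_def d_rs_def fst_conv snd_conv
  by (rule derivative_eq_intros refl)+ (simp add: algebra_simps power2_eq_square)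

lemma d_ss_correct: "((\<lambda>s. d_s c (a, s)) has_real_derivative d_ss c (a, b)) (at b)"
  unfolding d_s_def d_ss_def fst_conv snd_conv
  by (rule derivative_eq_intros refl)+ (simp add: algebra_simps power2_eq_square)

end

theory Submission
  imports Defs
begin

text \<open>For \<open>\<xi> = (a, b) \<noteq> 0\<close> the map \<open>c \<mapsto> \<pi>\<^sub>1\<^sub>,\<^sub>2 P\<^sub>\<xi> c\<close> factors through the Hessian of the
  cubic at \<open>\<xi>\<close>, which is onto \<open>\<real>\<^sup>3\<close>; so its range is the 3-dimensional space spanned by three
  explicit vectors depending affinely on \<open>\<xi>\<close>. A vector \<open>f\<close> lies in that space iff \<open>\<xi>\<close> solves
  two affine equations whose coefficients are entries of \<open>f\<close>; for \<open>f \<noteq> 0\<close> they are not both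
  trivial, so the exceptional \<open>\<xi>\<close> lie on a line or form the empty set.\<close>

lemma vec5_eq_iff:
  "(x::real^5) = y \<longleftrightarrow> x$1 = y$1 \<and> x$2 = y$2 \<and> x$3 = y$3 \<and> x$4 = y$4 \<and> x$5 = y$5"
proof
  assume "x$1 = y$1 \<and> x$2 = y$2 \<and> x$3 = y$3 \<and> x$4 = y$4 \<and> x$5 = y$5"
  then show "x = y"
    unfolding vec_eq_iff by (metis (full_types) exhaust_5)
qed simp

lemma vector_4:
  "(vector [x1,x2,x3,x4] ::real^4)$1 = x1"
  "(vector [x1,x2,x3,x4] ::real^4)$2 = x2"
  "(vector [x1,x2,x3,x4] ::real^4)$3 = x3"
  "(vector [x1,x2,x3,x4] ::real^4)$4 = x4"
  unfolding vector_def by simp_all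

lemma AE_lborel_hyperplane:
  fixes a :: "'a::euclidean_space"
  assumes "a \<noteq> 0 \<or> b \<noteq> 0"
  shows "AE x in lborel. a \<bullet> x \<noteq> b"
proof (rule AE_I')
  have "{x. a \<bullet> x = b} \<in> sets lborel"
    by (simp add: borel_closed closed_hyperplane)
  then show "{x. a \<bullet> x = b} \<in> null_sets lborel"
    using negligible_hyperplane[OF assms]
    by (simp add: negligible_iff_null_sets null_sets_completion_iff)
qed auto

lemma AE_lborel_not_on_two_hyperplanes:
  fixes a c :: "'a::euclidean_space"
  assumes "a \<noteq> 0 \<or> b \<noteq> 0 \<or> c \<noteq> 0 \<or> d \<noteq> 0"
  shows "AE x in lborel. \<not> (a \<bullet> x = b \<and> c \<bullet> x = d)"
  using assms AE_lborel_hyperplane[of a b] AE_lborel_hyperplane[of c d]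
  by (auto elim: eventually_mono)

definition taylor_rr :: "real \<times> real \<Rightarrow> real ^ 5" where
  "taylor_rr \<xi> = vector [- fst \<xi>, 0, 1, 0, 0]"

definition taylor_rs :: "real \<times> real \<Rightarrow> real ^ 5" where
  "taylor_rs \<xi> = vector [- snd \<xi> / 2, - fst \<xi> / 2, 0, 1, 0]"

definition taylor_ss :: "real \<times> real \<Rightarrow> real ^ 5" where
  "taylor_ss \<xi> = vector [0, - snd \<xi>, 0, 0, 1]"

lemmas taylor_vector_defs = taylor_rr_def taylor_rs_def taylor_ss_def
lemmas derivative_defs = d_r_def d_s_def d_rr_def d_rs_def d_ss_def

text \<open>Since the second derivatives of a cubic are homogeneous of degree 1, Euler's relation
  \<open>2 d_r = a d_rr + b d_rs\<close> (and likewise for \<open>d_s\<close>) absorbs the first derivatives.\<close>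
lemma piP_eq_hessian_combination:
  "piP \<xi> c = (d_rr c \<xi> / 2) *\<^sub>R taylor_rr \<xi> + d_rs c \<xi> *\<^sub>R taylor_rs \<xi>
              + (d_ss c \<xi> / 2) *\<^sub>R taylor_ss \<xi>"
  unfolding vec5_eq_iff
  by (cases \<xi>) (simp add: piP_def taylor_vector_defs vector_5 derivative_defs
      algebra_simps power2_eq_square)

lemma hessian_surjective:
  assumes "\<xi> \<noteq> 0"
  shows "\<exists>c. d_rr c \<xi> = p \<and> d_rs c \<xi> = q \<and> d_ss c \<xi> = t"
proof -
  obtain a b where \<xi>: "\<xi> = (a, b)" by fastforce
  txt \<open>The system is triangular in the coefficients of the cubic: set the last one
    (resp. the first one) to zero and back-substitute.\<close>
  show ?thesis
  proof (cases "a = 0")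
    case False
    let ?c = "vector [(a^2 * p - a * b * q + b^2 * t) / (6 * a^3), (a * q - b * t) / (2 * a^2),
                      t / (2 * a), 0]"
    have "d_rr ?c \<xi> = p \<and> d_rs ?c \<xi> = q \<and> d_ss ?c \<xi> = t"
      using False by (simp add: \<xi> derivative_defs vector_4 field_simps power2_eq_square power3_eq_cube)
    then show ?thesis ..
  next
    case True
    then have "b \<noteq> 0" using assms \<xi> by (simp add: zero_prod_def)
    let ?c = "vector [0, p / (2 * b), (b * q - a * p) / (2 * b^2),
                      (b^2 * t - a * b * q + a^2 * p) / (6 * b^3)]"
    have "d_rr ?c \<xi> = p \<and> d_rs ?c \<xi> = q \<and> d_ss ?c \<xi> = t"
      using \<open>b \<noteq> 0\<close> by (simp add: \<xi> derivative_defs vector_4 field_simps power2_eq_square power3_eq_cube)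
    then show ?thesis ..
  qed
qed

lemma span_range_piP_insert:
  assumes "\<xi> \<noteq> 0"
  shows "span (range (piP \<xi>) \<union> {f}) = span (insert f {taylor_rr \<xi>, taylor_rs \<xi>, taylor_ss \<xi>})"
    (is "_ = span (insert f ?T)")
proof (rule span_eq[THEN iffD2], rule conjI)
  have "range (piP \<xi>) \<subseteq> span ?T"
    unfolding image_subset_iff piP_eq_hessian_combination
    by (intro ballI span_add span_scale span_base) auto
  also have "span ?T \<subseteq> span (insert f ?T)"
    by (rule span_mono) auto
  finally show "range (piP \<xi>) \<union> {f} \<subseteq> span (insert f ?T)"
    by (auto intro: span_base)
next
  have "x *\<^sub>R taylor_rr \<xi> + y *\<^sub>R taylor_rs \<xi> + z *\<^sub>R taylor_ss \<xi> \<in> range (piP \<xi>)"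
    for x y z
  proof -
    obtain c where "d_rr c \<xi> = 2 * x \<and> d_rs c \<xi> = y \<and> d_ss c \<xi> = 2 * z"
      using hessian_surjective[OF assms] by blast
    then have "piP \<xi> c = x *\<^sub>R taylor_rr \<xi> + y *\<^sub>R taylor_rs \<xi> + z *\<^sub>R taylor_ss \<xi>"
      by (simp add: piP_eq_hessian_combination)
    then show ?thesis
      by (metis rangeI)
  qed
  from this[of 1 0 0] this[of 0 1 0] this[of 0 0 1]
  have "?T \<subseteq> range (piP \<xi>)"
    by simp
  then show "insert f ?T \<subseteq> span (range (piP \<xi>) \<union> {f})"
    by (auto intro: span_base)
qed

lemma dim_taylor_vectors: "dim {taylor_rr \<xi>, taylor_rs \<xi>, taylor_ss \<xi>} = 3"
proof -
  have "dim {taylor_ss \<xi>} = 1"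
    by (subst dim_insert) (auto simp: taylor_ss_def vec5_eq_iff vector_5)
  then have "dim {taylor_rs \<xi>, taylor_ss \<xi>} = 2"
    by (subst dim_insert) (auto simp: span_singleton taylor_vector_defs vec5_eq_iff vector_5)
  then show ?thesis
    by (subst dim_insert)
      (auto simp: span_breakdown_eq span_singleton taylor_vector_defs vec5_eq_iff vector_5)
qed

lemma in_span_taylor_vectors_iff:
  "f \<in> span {taylor_rr \<xi>, taylor_rs \<xi>, taylor_ss \<xi>} \<longleftrightarrow>
     (f$3, f$4 / 2) \<bullet> \<xi> = - f$1 \<and> (f$4 / 2, f$5) \<bullet> \<xi> = - f$2"
proof
  assume "f \<in> span {taylor_rr \<xi>, taylor_rs \<xi>, taylor_ss \<xi>}"
  then obtain x y z where "f = x *\<^sub>R taylor_rr \<xi> + y *\<^sub>R taylor_rs \<xi> + z *\<^sub>R taylor_ss \<xi>"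
    by (auto simp: span_breakdown_eq span_singleton algebra_simps)
  then show "(f$3, f$4 / 2) \<bullet> \<xi> = - f$1 \<and> (f$4 / 2, f$5) \<bullet> \<xi> = - f$2"
    by (cases \<xi>) (simp add: taylor_vector_defs vector_5 inner_prod_def algebra_simps)
next
  assume "(f$3, f$4 / 2) \<bullet> \<xi> = - f$1 \<and> (f$4 / 2, f$5) \<bullet> \<xi> = - f$2"
  then have "f = f$3 *\<^sub>R taylor_rr \<xi> + f$4 *\<^sub>R taylor_rs \<xi> + f$5 *\<^sub>R taylor_ss \<xi>"
    by (cases \<xi>) (simp add: vec5_eq_iff taylor_vector_defs vector_5 inner_prod_def algebra_simps)
  then show "f \<in> span {taylor_rr \<xi>, taylor_rs \<xi>, taylor_ss \<xi>}"
    by (metis insertI1 insertI2 span_add span_base span_scale)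
qed

lemma dim_span_range_piP_insert:
  assumes "\<xi> \<noteq> 0"
  shows "dim (span (range (piP \<xi>) \<union> {f})) =
           (if (f$3, f$4 / 2) \<bullet> \<xi> = - f$1 \<and> (f$4 / 2, f$5) \<bullet> \<xi> = - f$2 then 3 else 4)"
  unfolding span_range_piP_insert[OF assms] dim_span dim_insert[of f]
  by (simp add: in_span_taylor_vectors_iff dim_taylor_vectors)

theorem lemma7p3:
  fixes f :: "real ^ 5"
  assumes "f \<noteq> 0"
  shows "AE \<xi> in lborel. dim (span ((piP \<xi>) ` UNIV \<union> {f})) = 4"
proof -
  have "(f$3, f$4 / 2) \<noteq> 0 \<or> - f$1 \<noteq> 0 \<or> (f$4 / 2, f$5) \<noteq> 0 \<or> - f$2 \<noteq> 0"
    using assms by (auto simp: vec5_eq_iff zero_prod_def)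
  then have "AE \<xi> in lborel. \<not> ((f$3, f$4 / 2) \<bullet> \<xi> = - f$1 \<and> (f$4 / 2, f$5) \<bullet> \<xi> = - f$2)"
    by (rule AE_lborel_not_on_two_hyperplanes)
  with AE_lborel_singleton[of 0] show ?thesis
    by eventually_elim (subst dim_span_range_piP_insert, auto)
qed

end
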